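(* Let $s\in(0,1)$. Given two arbitrary constants $C_1,C_2>0$, there exists a function $G:\mathbb{R}\to[0,+\infty)$ such that: (1) $G$ is compactly supported; (2) $G(x)\le C_1$ for all $x\in\mathbb{R}$; (3) $(-\Delta)^sG(x)\le -C_2|x|^{-(1+2s)}$ for all $x\in\mathbb{R}$ with $\mathrm{dist}(x,\mathrm{supp}(G))\ge1$.
   Context: $(-\Delta)^sw(x)=\sigma_s\,\mathrm{P.V.}\int_{\mathbb{R}}\frac{w(x)-w(y)}{|x-y|^{1+2s}}dy$ with $\sigma_s>0$ the standard normalization constant. *)

theory Defs
  imports "HOL-Analysis.Analysis"
begin

text \<open>Standard normalisation constant of the 1D fractional Laplacian:
  sigma_s = s 4^s Gamma(1/2+s) / (sqrt pi * Gamma(1-s))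
  (= 4^s Gamma(1/2+s) / (sqrt pi |Gamma(-s)|)).\<close>
definition frac_const :: "real \<Rightarrow> real" where
  "frac_const s = s * 4 powr s * Gamma (1/2 + s) / (sqrt pi * Gamma (1 - s))"

definition frac_trunc :: "real \<Rightarrow> (real \<Rightarrow> real) \<Rightarrow> real \<Rightarrow> real \<Rightarrow> real" where
  "frac_trunc s w x eps =
     set_lebesgue_integral lborel {y. eps < \<bar>x - y\<bar>}
       (\<lambda>y. (w x - w y) / abs (x - y) powr (1 + 2 * s))"

definition frac_lap_at :: "real \<Rightarrow> (real \<Rightarrow> real) \<Rightarrow> real \<Rightarrow> real \<Rightarrow> bool" where
  "frac_lap_at s w x v \<longleftrightarrow>
     (\<forall>eps>0. set_integrable lborel {y. eps < \<bar>x - y\<bar>}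
                (\<lambda>y. (w x - w y) / abs (x - y) powr (1 + 2 * s))) \<and>
     ((\<lambda>eps. frac_const s * frac_trunc s w x eps) \<longlongrightarrow> v) (at_right 0)"

definition fsupp :: "(real \<Rightarrow> real) \<Rightarrow> real set" where
  "fsupp G = closure {x. G x \<noteq> 0}"

end

theory Submission
  imports Defs
begin

text \<open>Take G = C1 on [-R, R] and 0 elsewhere. At a point x at distance at least 1 from the
  support, G(x) = 0 and the principal value is an absolutely convergent integral:
  (-\<Delta>)^s G(x) = -\<sigma>_s \<integral>_{-R}^{R} C1 / |x-y|^(1+2s) dy. Since |x - y| \<le> 2|x| there, this is
  at most -\<sigma>_s 2R C1 2^-(1+2s) |x|^-(1+2s) \<le> -\<sigma>_s R C1 |x|^-(1+2s) / 4, and R = 4 C2 / (\<sigma>_s C1)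
  makes this -C2 |x|^-(1+2s).\<close>

lemma frac_const_pos:
  assumes "0 < s" "s < 1"
  shows "0 < frac_const s"
  unfolding frac_const_def using assms
  by (intro divide_pos_pos mult_pos_pos Gamma_real_pos) auto

lemma fsupp_scaled_indicator_interval:
  fixes c :: real
  assumes "c \<noteq> 0"
  shows "fsupp (\<lambda>y. c * indicator {a..b} y) = {a..b}"
proof -
  have "{y. c * indicator {a..b} y \<noteq> 0} = {a..b}"
    using assms by (auto simp: indicator_def)
  then show ?thesis unfolding fsupp_def by simp
qed

lemma abs_ge_of_dist_interval_ge:
  fixes x R d :: real
  assumes "0 \<le> R" "0 < d" "\<forall>y\<in>{-R..R}. d \<le> dist x y"
  shows "R + d \<le> \<bar>x\<bar>"
proof -
  define y where "y = max (-R) (min R x)"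
  have "y \<in> {-R..R}" using assms(1) by (auto simp: y_def)
  with assms(3) have "d \<le> dist x y" by blast
  moreover have "dist x y \<le> \<bar>x\<bar> - R \<or> dist x y = 0"
    by (auto simp: y_def dist_real_def)
  ultimately show ?thesis using assms(2) by linarith
qed

text \<open>Away from the support of w the singularity of the kernel is never seen, so every
  truncation below \<delta> gives the same integral and the principal value is that integral.\<close>
lemma frac_lap_at_outside_support:
  fixes w :: "real \<Rightarrow> real"
  assumes "0 < \<delta>" and vanish: "\<And>y. \<bar>x - y\<bar> \<le> \<delta> \<Longrightarrow> w y = 0"
    and int: "integrable lborel (\<lambda>y. w y / \<bar>x - y\<bar> powr (1 + 2 * s))"
  shows "frac_lap_at s w x
           (- frac_const s * (LINT y|lborel. w y / \<bar>x - y\<bar> powr (1 + 2 * s)))"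
proof -
  define k where "k = (\<lambda>y. w y / \<bar>x - y\<bar> powr (1 + 2 * s))"
  have integrand: "(w x - w y) / \<bar>x - y\<bar> powr (1 + 2 * s) = - k y" for y
    using vanish[of x] \<open>0 < \<delta>\<close> by (simp add: k_def)
  have meas: "{y. eps < \<bar>x - y\<bar>} \<in> sets lborel" for eps :: real
  proof -
    have "open {y. eps < \<bar>x - y\<bar>}" by (intro open_Collect_less continuous_intros)
    then show ?thesis by simp
  qed
  have trunc: "frac_trunc s w x eps = - (LINT y|lborel. k y)" if "eps < \<delta>" for eps
  proof -
    have "frac_trunc s w x eps = (LINT y|lborel. indicator {y. eps < \<bar>x - y\<bar>} y *\<^sub>R - k y)"
      unfolding frac_trunc_def set_lebesgue_integral_def integrand ..
    also have "\<dots> = (LINT y|lborel. - k y)"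
    proof (rule Bochner_Integration.integral_cong)
      show "indicator {y. eps < \<bar>x - y\<bar>} y *\<^sub>R - k y = - k y" for y
        using vanish[of y] that by (cases "eps < \<bar>x - y\<bar>") (auto simp: k_def)
    qed simp
    finally show ?thesis by simp
  qed
  have "\<forall>\<^sub>F eps in at_right 0. - frac_const s * (LINT y|lborel. k y)
          = frac_const s * frac_trunc s w x eps"
    using eventually_at_right_real[OF \<open>0 < \<delta>\<close>] by eventually_elim (simp add: trunc)
  then have "((\<lambda>eps. frac_const s * frac_trunc s w x eps)
               \<longlongrightarrow> - frac_const s * (LINT y|lborel. k y)) (at_right 0)"
    by (rule Lim_transform_eventually[OF tendsto_const])
  moreover have "set_integrable lborel {y. eps < \<bar>x - y\<bar>}
                   (\<lambda>y. (w x - w y) / \<bar>x - y\<bar> powr (1 + 2 * s))" for eps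
    unfolding set_integrable_def integrand
    using int by (intro integrable_mult_indicator[OF meas] integrable_minus) (simp add: k_def)
  ultimately show ?thesis unfolding frac_lap_at_def k_def by blast
qed

lemma integral_interval_kernel_lower:
  fixes x R c p :: real
  assumes "0 \<le> R" "R < \<bar>x\<bar>" "0 \<le> c" "0 \<le> p"
  shows "integrable lborel (\<lambda>y. c * indicator {-R..R} y / \<bar>x - y\<bar> powr p)"
    and "2 * R * c * (2 * \<bar>x\<bar>) powr (-p)
           \<le> (LINT y|lborel. c * indicator {-R..R} y / \<bar>x - y\<bar> powr p)"
proof -
  define S where "S = {-R..R}"
  define h where "h = (\<lambda>y. c / \<bar>x - y\<bar> powr p)"
  have near: "0 < \<bar>x - y\<bar>" "\<bar>x - y\<bar> \<le> 2 * \<bar>x\<bar>" if "y \<in> S" for y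
    using that assms(2) by (auto simp: S_def)
  have eq: "c * indicator S y / \<bar>x - y\<bar> powr p = indicator S y *\<^sub>R h y" for y
    by (simp add: h_def indicator_def)
  have "continuous_on S h"
    unfolding h_def by (intro continuous_intros) (use near in force)+
  then have int_h: "integrable lborel (\<lambda>y. indicator S y *\<^sub>R h y)"
    by (intro borel_integrable_compact) (auto simp: S_def)
  then show "integrable lborel (\<lambda>y. c * indicator {-R..R} y / \<bar>x - y\<bar> powr p)"
    unfolding S_def[symmetric] eq .
  define m where "m = c * (2 * \<bar>x\<bar>) powr (-p)"
  have int_m: "integrable lborel (\<lambda>y. indicator S y *\<^sub>R m)"
    by (rule borel_integrable_compact) (auto simp: S_def)
  have "indicator S y *\<^sub>R m \<le> indicator S y *\<^sub>R h y" for y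
  proof (cases "y \<in> S")
    case True
    have "\<bar>x - y\<bar> powr p \<le> (2 * \<bar>x\<bar>) powr p"
      using near[OF True] assms(4) by (intro powr_mono2) auto
    then have "c / (2 * \<bar>x\<bar>) powr p \<le> c / \<bar>x - y\<bar> powr p"
      using near[OF True] assms(3) by (intro divide_left_mono) auto
    then show ?thesis using True by (simp add: h_def m_def powr_minus divide_inverse)
  qed simp
  then have "(LINT y|lborel. indicator S y *\<^sub>R m) \<le> (LINT y|lborel. indicator S y *\<^sub>R h y)"
    by (intro integral_mono[OF int_m int_h])
  moreover have "(LINT y|lborel. indicator S y *\<^sub>R m) = measure lborel S * m"
    by (simp add: S_def)
  moreover have "measure lborel S = 2 * R"
    using assms(1) by (simp add: S_def)
  ultimately show "2 * R * c * (2 * \<bar>x\<bar>) powr (-p)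
                     \<le> (LINT y|lborel. c * indicator {-R..R} y / \<bar>x - y\<bar> powr p)"
    unfolding S_def[symmetric] eq m_def by (simp add: mult.assoc)
qed

lemma powr_two_mult_ge:
  fixes t p :: real
  assumes "0 < t" "p \<le> 3"
  shows "t powr (-p) / 8 \<le> (2 * t) powr (-p)"
proof -
  have "(2::real) powr (-3) \<le> 2 powr (-p)" using assms(2) by (intro powr_mono) auto
  then have "1/8 \<le> (2::real) powr (-p)" by (simp add: powr_minus powr_numeral)
  then show ?thesis using assms(1) by (simp add: powr_mult mult_right_mono)
qed

lemma frac_lap_at_interval_indicator_far:
  fixes s R c x :: real
  assumes "0 < s" "s < 1" "0 \<le> R" "0 \<le> c" "R + 1 \<le> \<bar>x\<bar>"
  shows "\<exists>v. frac_lap_at s (\<lambda>y. c * indicator {-R..R} y) x v \<and>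
               v \<le> - frac_const s * R * c * \<bar>x\<bar> powr (-(1 + 2 * s)) / 4"
proof -
  define G where "G = (\<lambda>y. c * indicator {-R..R} y :: real)"
  define I where "I = (LINT y|lborel. G y / \<bar>x - y\<bar> powr (1 + 2 * s))"
  have "G y = 0" if "\<bar>x - y\<bar> \<le> 1/2" for y
  proof -
    have "R < \<bar>y\<bar>" using that assms(5) abs_triangle_ineq[of "x - y" y] by linarith
    then show ?thesis by (auto simp: G_def indicator_def)
  qed
  then have lap: "frac_lap_at s G x (- frac_const s * I)"
    unfolding I_def using assms
    by (intro frac_lap_at_outside_support[of "1/2"])
       (auto simp: G_def intro: integral_interval_kernel_lower(1))
  have "R * c * \<bar>x\<bar> powr (-(1 + 2 * s)) / 4
          = 2 * R * c * (\<bar>x\<bar> powr (-(1 + 2 * s)) / 8)" by simp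
  also have "\<dots> \<le> 2 * R * c * (2 * \<bar>x\<bar>) powr (-(1 + 2 * s))"
    using assms by (intro mult_left_mono powr_two_mult_ge) auto
  also have "\<dots> \<le> I"
    unfolding I_def G_def using assms by (intro integral_interval_kernel_lower(2)) auto
  finally have "- frac_const s * I \<le> - frac_const s * (R * c * \<bar>x\<bar> powr (-(1 + 2 * s)) / 4)"
    using frac_const_pos[OF assms(1,2)] by (intro mult_left_mono_neg) auto
  with lap show ?thesis unfolding G_def by (intro exI[of _ "- frac_const s * I"]) simp
qed

theorem mainTheorem12:
  fixes s C1 C2 :: real
  assumes "0 < s" "s < 1" "0 < C1" "0 < C2"
  shows "\<exists>G :: real \<Rightarrow> real.
           (\<forall>x. 0 \<le> G x) \<and>
           compact (fsupp G) \<and>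
           (\<forall>x. G x \<le> C1) \<and>
           (\<forall>x. (\<forall>y\<in>fsupp G. 1 \<le> dist x y) \<longrightarrow>
                  x \<noteq> 0 \<and>
                  (\<exists>v. frac_lap_at s G x v \<and> v \<le> - C2 * abs x powr (-(1 + 2 * s))))"
proof -
  define \<sigma> where "\<sigma> = frac_const s"
  define R where "R = 4 * C2 / (\<sigma> * C1)"
  define G where "G = (\<lambda>y. C1 * indicator {-R..R} y :: real)"
  have "0 < \<sigma>" unfolding \<sigma>_def using assms(1,2) by (rule frac_const_pos)
  then have "0 < R" using assms by (simp add: R_def)
  have supp: "fsupp G = {-R..R}"
    unfolding G_def using assms by (intro fsupp_scaled_indicator_interval) simp
  have "(\<forall>y\<in>fsupp G. 1 \<le> dist x y) \<longrightarrow> x \<noteq> 0 \<and>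
          (\<exists>v. frac_lap_at s G x v \<and> v \<le> - C2 * \<bar>x\<bar> powr (-(1 + 2 * s)))" for x
  proof
    assume "\<forall>y\<in>fsupp G. 1 \<le> dist x y"
    then have far: "R + 1 \<le> \<bar>x\<bar>"
      unfolding supp using \<open>0 < R\<close> by (intro abs_ge_of_dist_interval_ge) auto
    obtain v where lap: "frac_lap_at s G x v"
        and bound: "v \<le> - \<sigma> * R * C1 * \<bar>x\<bar> powr (-(1 + 2 * s)) / 4"
      using frac_lap_at_interval_indicator_far[OF assms(1,2) _ _ far, of C1] \<open>0 < R\<close> assms
      unfolding G_def \<sigma>_def by auto
    have "\<sigma> * R * C1 / 4 = C2" using \<open>0 < \<sigma>\<close> assms by (simp add: R_def)
    then have "- \<sigma> * R * C1 * \<bar>x\<bar> powr (-(1 + 2 * s)) / 4 = - C2 * \<bar>x\<bar> powr (-(1 + 2 * s))"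
      by (auto simp: algebra_simps)
    with bound have "v \<le> - C2 * \<bar>x\<bar> powr (-(1 + 2 * s))" by (simp only:)
    moreover have "x \<noteq> 0" using far \<open>0 < R\<close> by auto
    ultimately show "x \<noteq> 0 \<and> (\<exists>v. frac_lap_at s G x v \<and> v \<le> - C2 * \<bar>x\<bar> powr (-(1 + 2 * s)))"
      using lap by blast
  qed
  moreover have "0 \<le> G x" "G x \<le> C1" for x using assms by (auto simp: G_def)
  ultimately show ?thesis using supp by (intro exI[of _ G]) auto
qed

end
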